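(* Consider a generalized linear model with data $\mathcal{D}=(X,\mathbf{y})$, $X\in\mathbb{R}^{n\times(p+1)}$ whose first column is the intercept column of ones, whose next $m$ columns are mandatory predictors, and whose remaining $p-m$ columns form the matrix $X_u\in\mathbb{R}^{n\times(p-m)}$. Suppose the log-likelihood depends on $(\beta_0,\boldsymbol{\beta})$ only through the linear predictor $\eta=\eta_0(\beta_0,\boldsymbol{\beta})+X_u\boldsymbol{\beta}_u\in\mathbb{R}^n$, where $\boldsymbol{\beta}_u\in\mathbb{R}^{p-m}$ are the non-mandatory coefficients and $\eta_0$ collects the intercept and mandatory contributions; write $-\frac1n\ell$ as a twice differentiable function of $\eta$ and let $H_\eta(\eta)=\nabla^2_{\eta\eta}\bigl(-\tfrac1n\ell\bigr)(\eta)$. Fix $\lambda\ge0$ and $\delta>0$. For $\mathbf{t}\in[0,1]^{p-m}$ let $T_{\mathbf{t}}=\mathrm{diag}(1,\dots,1,t_1,\dots,t_{p-m})$ (with $m$ leading ones), $\Gamma_{\mathbf{t}}=\sqrt{I-T_{\mathbf{t}}^2}$, $$h_{\delta,\lambda}(\mathbf{t},\beta_0,\boldsymbol{\beta})=-\tfrac1n\ell(\beta_0,T_{\mathbf{t}}\boldsymbol{\beta};\mathcal{D})+\lambda\|\boldsymbol{\beta}\|_2^2+\delta\|\Gamma_{\mathbf{t}}\boldsymbol{\beta}\|_2^2,\qquad f_{\delta,\lambda}(\mathbf{t})=\inf_{\beta_0,\boldsymbol{\beta}}h_{\delta,\lambda}(\mathbf{t},\beta_0,\boldsymbol{\beta}).$$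 Let $\mathcal{T}_k=\{\mathbf{t}\in[0,1]^{p-m}:\mathbf{1}^\top\mathbf{t}=k\}$ and $\mathcal{S}_k=\{\mathbf{s}\in\{0,1\}^{p-m}:\mathbf{1}^\top\mathbf{s}=k\}$. Assume $X_u^\top H_\eta(\eta)X_u\preceq 2\delta I$ for all $\eta$. Then for every fixed $(\beta_0,\boldsymbol{\beta})$ the map $\mathbf{t}\mapsto h_{\delta,\lambda}(\mathbf{t},\beta_0,\boldsymbol{\beta})$ is concave on $(0,1)^{p-m}$. Consequently $f_{\delta,\lambda}$ is concave on $(0,1)^{p-m}$ (and extends concavely to $\mathcal{T}_k$), so a minimizer of $\min_{\mathbf{t}\in\mathcal{T}_k}f_{\delta,\lambda}(\mathbf{t})$ can be chosen at a corner $\mathbf{s}\in\mathcal{S}_k$.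
   Context: $\preceq$ denotes the Loewner (positive semidefinite) order. $\ell$ is the GLM log-likelihood; $T_{\mathbf{t}}\boldsymbol{\beta}=(\beta_1,\dots,\beta_m,t_1\beta_{m+1},\dots,t_{p-m}\beta_p)$, so the linear predictor at $(\beta_0,T_{\mathbf{t}}\boldsymbol{\beta})$ is $\eta_0(\beta_0,\boldsymbol{\beta})+X_u(\mathbf{t}\odot\boldsymbol{\beta}_u)$, with $\odot$ the elementwise product. *)

theory Defs
  imports "HOL-Analysis.Analysis"
begin

text \<open>Coefficient vector beta (without intercept) is indexed by a finite type 'p
  (all p predictors); the set U of indices is the non-mandatory ones, the
  complement are the m mandatory ones.
  The mask t lives in real^'p with t$i = 1 fixed for mandatory i, so that
  T_t = diag(t).  X :: real^'p^'n are the non-intercept columns of the design.\<close>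

definition loewner_le :: "real^'a^'a \<Rightarrow> real^'a^'a \<Rightarrow> bool" where
  "loewner_le A B \<longleftrightarrow> (\<forall>x. x \<bullet> (A *v x) \<le> x \<bullet> (B *v x))"

definition Xu_of :: "'p set \<Rightarrow> real^'p^'n \<Rightarrow> real^'p^'n" where
  "Xu_of U X = (\<chi> j k. if k \<in> U then X$j$k else 0)"

definition lin_pred :: "real^'p^'n \<Rightarrow> real^'p \<Rightarrow> real \<Rightarrow> real^'p \<Rightarrow> real^'n" where
  "lin_pred X t b0 b = (\<chi> j. b0) + X *v (\<chi> i. t$i * b$i)"

text \<open>h_{delta,lambda}(t, beta0, beta); L is -(1/n) * loglikelihood as a function of eta.\<close>
definition hobj :: "(real^'n \<Rightarrow> real) \<Rightarrow> real^'p^'n \<Rightarrow> real \<Rightarrow> real \<Rightarrow>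
                    real^'p \<Rightarrow> real \<Rightarrow> real^'p \<Rightarrow> real" where
  "hobj L X lam del t b0 b =
     L (lin_pred X t b0 b) + lam * (norm b)^2
     + del * (norm (\<chi> i. sqrt (1 - (t$i)^2) * b$i))^2"

definition fobj :: "(real^'n \<Rightarrow> real) \<Rightarrow> real^'p^'n \<Rightarrow> real \<Rightarrow> real \<Rightarrow> real^'p \<Rightarrow> ereal" where
  "fobj L X lam del t = (INF bb \<in> (UNIV :: (real \<times> (real^'p)) set).
                           ereal (hobj L X lam del t (fst bb) (snd bb)))"

definition ereal_concave_on :: "('a::real_vector) set \<Rightarrow> ('a \<Rightarrow> ereal) \<Rightarrow> bool" where
  "ereal_concave_on S f \<longleftrightarrow> (\<forall>x\<in>S. \<forall>y\<in>S. \<forall>a::real. 0 \<le> a \<and> a \<le> 1 \<longrightarrow>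
      ereal a * f x + ereal (1 - a) * f y \<le> f (a *\<^sub>R x + (1 - a) *\<^sub>R y))"

definition open_box :: "'p set \<Rightarrow> (real^'p) set" where
  "open_box U = {t. (\<forall>i\<in>U. 0 < t$i \<and> t$i < 1) \<and> (\<forall>i. i \<notin> U \<longrightarrow> t$i = 1)}"

definition Tset :: "'p set \<Rightarrow> nat \<Rightarrow> (real^'p) set" where
  "Tset U k = {t. (\<forall>i\<in>U. 0 \<le> t$i \<and> t$i \<le> 1) \<and> (\<forall>i. i \<notin> U \<longrightarrow> t$i = 1)
                  \<and> (\<Sum>i\<in>U. t$i) = real k}"

definition Sset :: "'p set \<Rightarrow> nat \<Rightarrow> (real^'p) set" where
  "Sset U k = {s. (\<forall>i\<in>U. s$i = 0 \<or> s$i = 1) \<and> (\<forall>i. i \<notin> U \<longrightarrow> s$i = 1)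
                  \<and> (\<Sum>i\<in>U. s$i) = real k}"

end

theory Submission
  imports Defs
begin

text \<open>On the closed box, \<delta> \<parallel>\<Gamma>_t \<beta>\<parallel>^2 = \<delta> \<parallel>\<beta>\<parallel>^2 - \<delta> \<parallel>t \<odot> \<beta>\<parallel>^2, so up to a constant h is the loss
  at the linear predictor minus \<delta> \<parallel>t \<odot> \<beta>\<parallel>^2. Along a segment t + s d with d supported on the
  non-mandatory coordinates, t \<odot> \<beta> moves along z = d \<odot> \<beta> and the predictor along X z, so the
  second derivative in s is (X z)' H (X z) - 2 \<delta> \<parallel>z\<parallel>^2 \<le> 0 by the Loewner bound: h is concave in t.
  An infimum of concave functions is concave, and in particular quasiconcave. A quasiconcave
  function on T_k is minimised on S_k: if t \<in> T_k has a fractional coordinate it has two, since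
  the coordinates sum to an integer, and shifting mass between them in either direction until
  one of them reaches 0 or 1 writes t as a convex combination of two points of T_k with fewer
  fractional coordinates.\<close>

lemma concave_on_eq:
  assumes "concave_on S g" and "\<And>x. x \<in> S \<Longrightarrow> f x = g x"
  shows "concave_on S f"
  using assms by (simp add: concave_on_iff convex_def)

lemma concave_on_if_concave_on_segments:
  fixes f :: "'a::real_vector \<Rightarrow> real"
  assumes "convex S"
    and "\<And>x y. x \<in> S \<Longrightarrow> y \<in> S \<Longrightarrow> concave_on {0..1} (\<lambda>s. f (y + s *\<^sub>R (x - y)))"
  shows "concave_on S f"
  unfolding concave_on_iff
proof (intro conjI assms(1) ballI allI impI)
  fix x y and u v :: real assume xy: "x \<in> S" "y \<in> S" and uv: "0 \<le> u" "0 \<le> v" "u + v = 1"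
  have "(1 - u) * f (y + 0 *\<^sub>R (x - y)) + u * f (y + 1 *\<^sub>R (x - y))
        \<le> f (y + ((1 - u) *\<^sub>R 0 + u *\<^sub>R 1) *\<^sub>R (x - y))"
    using concave_onD[OF assms(2)[OF xy], of u 0 1] uv by simp
  moreover have "y + u *\<^sub>R (x - y) = u *\<^sub>R x + v *\<^sub>R y"
    using uv by (simp add: algebra_simps flip: scaleR_add_left)
  moreover have "v = 1 - u" using uv by simp
  ultimately show "u * f x + v * f y \<le> f (u *\<^sub>R x + v *\<^sub>R y)"
    by (simp add: add.commute)
qed

definition quasiconcave_on :: "'a::real_vector set \<Rightarrow> ('a \<Rightarrow> 'b::linorder) \<Rightarrow> bool" where
  "quasiconcave_on S F \<longleftrightarrow> (\<forall>x\<in>S. \<forall>y\<in>S. \<forall>a::real. 0 \<le> a \<and> a \<le> 1 \<longrightarrow>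
      min (F x) (F y) \<le> F (a *\<^sub>R x + (1 - a) *\<^sub>R y))"

lemma quasiconcave_on_subset: "quasiconcave_on T F \<Longrightarrow> S \<subseteq> T \<Longrightarrow> quasiconcave_on S F"
  by (auto simp: quasiconcave_on_def)

lemma quasiconcave_on_ereal_if_concave_on:
  assumes "concave_on S f"
  shows "quasiconcave_on S (\<lambda>x. ereal (f x))"
  unfolding quasiconcave_on_def
proof (intro ballI allI impI)
  fix x y and a :: real assume xy: "x \<in> S" "y \<in> S" and a: "0 \<le> a \<and> a \<le> 1"
  have "a * min (f x) (f y) + (1 - a) * min (f x) (f y) \<le> a * f x + (1 - a) * f y"
    using a by (intro add_mono mult_left_mono) auto
  also have "\<dots> \<le> f (a *\<^sub>R x + (1 - a) *\<^sub>R y)"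
    using concave_onD[OF assms, of a y x] xy a by (simp add: add.commute)
  finally have "min (f x) (f y) \<le> f (a *\<^sub>R x + (1 - a) *\<^sub>R y)"
    by (simp add: algebra_simps)
  then show "min (ereal (f x)) (ereal (f y)) \<le> ereal (f (a *\<^sub>R x + (1 - a) *\<^sub>R y))"
    by (simp add: min_def split: if_splits)
qed

lemma quasiconcave_on_INF:
  fixes F :: "'a::real_vector \<Rightarrow> 'b \<Rightarrow> 'c::complete_linorder"
  assumes "\<And>b. quasiconcave_on S (\<lambda>x. F x b)"
  shows "quasiconcave_on S (\<lambda>x. INF b\<in>B. F x b)"
  unfolding quasiconcave_on_def
proof (intro ballI allI impI INF_greatest)
  fix x y b and a :: real assume "x \<in> S" "y \<in> S" "0 \<le> a \<and> a \<le> 1" "b \<in> B"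
  then have "min (INF b\<in>B. F x b) (INF b\<in>B. F y b) \<le> min (F x b) (F y b)"
    by (intro min.mono INF_lower)
  also have "\<dots> \<le> F (a *\<^sub>R x + (1 - a) *\<^sub>R y) b"
    using assms \<open>x \<in> S\<close> \<open>y \<in> S\<close> \<open>0 \<le> a \<and> a \<le> 1\<close>
    by (simp add: quasiconcave_on_def)
  finally show "min (INF b\<in>B. F x b) (INF b\<in>B. F y b) \<le> F (a *\<^sub>R x + (1 - a) *\<^sub>R y) b" .
qed

lemma ereal_concave_on_INF:
  fixes h :: "'a::real_vector \<Rightarrow> 'b \<Rightarrow> real"
  assumes "\<And>b. concave_on S (\<lambda>x. h x b)"
  shows "ereal_concave_on S (\<lambda>x. INF b\<in>B. ereal (h x b))"
  unfolding ereal_concave_on_def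
proof (intro ballI allI impI INF_greatest)
  fix x y b and a :: real assume xy: "x \<in> S" "y \<in> S" and a: "0 \<le> a \<and> a \<le> 1" and "b \<in> B"
  then have "ereal a * (INF b\<in>B. ereal (h x b)) + ereal (1 - a) * (INF b\<in>B. ereal (h y b))
        \<le> ereal a * ereal (h x b) + ereal (1 - a) * ereal (h y b)"
    by (intro add_mono ereal_mult_left_mono INF_lower) auto
  also have "\<dots> = ereal (a * h x b + (1 - a) * h y b)" by simp
  also have "\<dots> \<le> ereal (h (a *\<^sub>R x + (1 - a) *\<^sub>R y) b)"
    using concave_onD[OF assms, of a y x] xy a by (simp add: add.commute)
  finally show "ereal a * (INF b\<in>B. ereal (h x b)) + ereal (1 - a) * (INF b\<in>B. ereal (h y b))
                \<le> ereal (h (a *\<^sub>R x + (1 - a) *\<^sub>R y) b)" .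
qed

lemma quadratic_form_transpose_mult:
  fixes M :: "real^'p^'n" and H :: "real^'n^'n"
  shows "v \<bullet> ((transpose M ** H ** M) *v v) = (M *v v) \<bullet> (H *v (M *v v))"
proof -
  have "(transpose M ** H ** M) *v v = transpose M *v (H *v (M *v v))"
    by (simp add: matrix_vector_mul_assoc matrix_mul_assoc)
  also have "\<dots> = (H *v (M *v v)) v* M" by simp
  finally show ?thesis by (metis inner_commute dot_lmul_matrix)
qed

lemma Xu_of_mult_eq:
  assumes "\<And>i. i \<notin> U \<Longrightarrow> z$i = 0"
  shows "Xu_of U X *v z = X *v z"
  using assms unfolding Xu_of_def
  by (auto simp: vec_eq_iff matrix_vector_mult_def intro!: sum.cong)

lemma loewner_le_Xu_quadratic_form_le:
  assumes "loewner_le (transpose (Xu_of U X) ** M ** Xu_of U X) ((2 * del) *\<^sub>R mat 1)"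
    and "\<And>i. i \<notin> U \<Longrightarrow> z$i = 0"
  shows "(M *v (X *v z)) \<bullet> (X *v z) \<le> 2 * del * (z \<bullet> z)"
proof -
  have "z \<bullet> ((transpose (Xu_of U X) ** M ** Xu_of U X) *v z) \<le> z \<bullet> (((2 * del) *\<^sub>R mat 1) *v z)"
    using assms(1) unfolding loewner_le_def by blast
  then show ?thesis
    by (simp add: quadratic_form_transpose_mult Xu_of_mult_eq[OF assms(2)] inner_commute
        flip: scaleR_matrix_vector_assoc)
qed

lemma concave_on_line_loss_minus_quadratic:
  fixes L :: "real^'n \<Rightarrow> real" and X :: "real^'p^'n"
  assumes grad: "\<And>eta. (L has_derivative (\<lambda>v. G eta \<bullet> v)) (at eta)"
    and hess: "\<And>eta. (G has_derivative (\<lambda>v. H eta *v v)) (at eta)"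
    and bound: "\<And>eta. loewner_le (transpose (Xu_of U X) ** H eta ** Xu_of U X)
                                   ((2 * del) *\<^sub>R mat 1)"
    and z: "\<And>i. i \<notin> U \<Longrightarrow> z$i = 0"
  shows "concave_on UNIV (\<lambda>s. L (c + s *\<^sub>R (X *v z)) - del * (norm (v + s *\<^sub>R z))\<^sup>2)"
proof -
  define w where "w = X *v z"
  have line: "((\<lambda>s. c + s *\<^sub>R w) has_derivative (\<lambda>r. r *\<^sub>R w)) (at s)" for s :: real
    by (auto intro!: derivative_eq_intros)
  have dL: "((\<lambda>s. L (c + s *\<^sub>R w)) has_real_derivative G (c + s *\<^sub>R w) \<bullet> w) (at s)" for s
    unfolding has_field_derivative_def
    by (rule has_derivative_eq_rhs[OF has_derivative_compose[OF line grad]]) (simp add: fun_eq_iff)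
  have dG: "((\<lambda>s. G (c + s *\<^sub>R w) \<bullet> w) has_real_derivative (H (c + s *\<^sub>R w) *v w) \<bullet> w) (at s)" for s
    unfolding has_field_derivative_def
    by (rule has_derivative_eq_rhs[OF has_derivative_inner_left[OF has_derivative_compose[OF line hess]]])
      (simp add: fun_eq_iff matrix_vector_mult_scaleR)
  have "(\<lambda>s. (v + s *\<^sub>R z) \<bullet> (v + s *\<^sub>R z))
          = (\<lambda>s. v \<bullet> v + 2 * s * (v \<bullet> z) + s\<^sup>2 * (z \<bullet> z))"
    by (simp add: fun_eq_iff inner_add_right inner_commute algebra_simps power2_eq_square)
  then have dN: "((\<lambda>s. (v + s *\<^sub>R z) \<bullet> (v + s *\<^sub>R z)) has_real_derivative
                   2 * (v \<bullet> z + s * (z \<bullet> z))) (at s)" for s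
    by (auto intro!: derivative_eq_intros simp: algebra_simps)
  show ?thesis
    unfolding w_def[symmetric] power2_norm_eq_inner
  proof (rule f''_le0_imp_concave)
    show "((\<lambda>s. L (c + s *\<^sub>R w) - del * ((v + s *\<^sub>R z) \<bullet> (v + s *\<^sub>R z))) has_real_derivative
            G (c + s *\<^sub>R w) \<bullet> w - del * (2 * (v \<bullet> z + s * (z \<bullet> z)))) (at s)" for s
      by (auto intro!: derivative_eq_intros dL dN)
    show "((\<lambda>s. G (c + s *\<^sub>R w) \<bullet> w - del * (2 * (v \<bullet> z + s * (z \<bullet> z)))) has_real_derivative
            (H (c + s *\<^sub>R w) *v w) \<bullet> w - del * (2 * (z \<bullet> z))) (at s)" for s
      by (auto intro!: derivative_eq_intros dG)
    show "(H (c + s *\<^sub>R w) *v w) \<bullet> w - del * (2 * (z \<bullet> z)) \<le> 0" for s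
      using loewner_le_Xu_quadratic_form_le[OF bound z] by (simp add: w_def ac_simps)
  qed simp
qed

lemma lin_pred_eq: "lin_pred X t b0 b = (\<chi> j. b0) + X *v (t * b)"
  by (simp add: lin_pred_def times_vec_def)

lemma concave_on_loss_minus_quadratic:
  fixes L :: "real^'n \<Rightarrow> real" and X :: "real^'p^'n"
  assumes grad: "\<And>eta. (L has_derivative (\<lambda>v. G eta \<bullet> v)) (at eta)"
    and hess: "\<And>eta. (G has_derivative (\<lambda>v. H eta *v v)) (at eta)"
    and bound: "\<And>eta. loewner_le (transpose (Xu_of U X) ** H eta ** Xu_of U X)
                                   ((2 * del) *\<^sub>R mat 1)"
    and S: "convex S" "\<And>x y i. x \<in> S \<Longrightarrow> y \<in> S \<Longrightarrow> i \<notin> U \<Longrightarrow> x$i = y$i"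
  shows "concave_on S (\<lambda>t. L (lin_pred X t b0 b) - del * (norm (t * b))\<^sup>2)"
proof (rule concave_on_if_concave_on_segments[OF S(1)])
  fix x y assume xy: "x \<in> S" "y \<in> S"
  have z: "((x - y) * b)$i = 0" if "i \<notin> U" for i
    using S(2)[OF xy that] by simp
  have "concave_on UNIV (\<lambda>s. L (((\<chi> j. b0) + X *v (y * b)) + s *\<^sub>R (X *v ((x - y) * b)))
                            - del * (norm (y * b + s *\<^sub>R ((x - y) * b)))\<^sup>2)"
    by (rule concave_on_line_loss_minus_quadratic[OF grad hess bound z])
  moreover have "lin_pred X (y + s *\<^sub>R (x - y)) b0 b = ((\<chi> j. b0) + X *v (y * b)) + s *\<^sub>R (X *v ((x - y) * b))"
    and "(y + s *\<^sub>R (x - y)) * b = y * b + s *\<^sub>R ((x - y) * b)" for s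
    by (simp_all add: lin_pred_eq vec_eq_iff matrix_vector_right_distrib matrix_vector_mult_scaleR algebra_simps)
  ultimately show "concave_on {0..1} (\<lambda>s. L (lin_pred X (y + s *\<^sub>R (x - y)) b0 b)
                                          - del * (norm ((y + s *\<^sub>R (x - y)) * b))\<^sup>2)"
    by (simp add: concave_on_def convex_on_subset)
qed

lemma hobj_eq_loss_minus_quadratic:
  assumes "\<And>i. (t$i)\<^sup>2 \<le> 1"
  shows "hobj L X lam del t b0 b
           = L (lin_pred X t b0 b) - del * (norm (t * b))\<^sup>2 + (lam + del) * (norm b)\<^sup>2"
proof -
  have "(norm (\<chi> i. sqrt (1 - (t$i)\<^sup>2) * b$i))\<^sup>2 = (\<Sum>i\<in>UNIV. (1 - (t$i)\<^sup>2) * (b$i)\<^sup>2)"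
    using assms by (simp add: power2_norm_eq_inner inner_vec_def power_mult_distrib flip: power2_eq_square)
  also have "\<dots> = (norm b)\<^sup>2 - (norm (t * b))\<^sup>2"
    unfolding power2_norm_eq_inner inner_vec_def
    by (simp add: algebra_simps power2_eq_square sum_subtractf)
  finally have penalty: "(norm (\<chi> i. sqrt (1 - (t$i)\<^sup>2) * b$i))\<^sup>2 = (norm b)\<^sup>2 - (norm (t * b))\<^sup>2" .
  show ?thesis
    unfolding hobj_def penalty by (simp add: algebra_simps)
qed

definition cl_box :: "'p set \<Rightarrow> (real^'p) set" where
  "cl_box U = {t. (\<forall>i\<in>U. 0 \<le> t$i \<and> t$i \<le> 1) \<and> (\<forall>i. i \<notin> U \<longrightarrow> t$i = 1)}"

lemma convex_cl_box: "convex (cl_box U)"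
proof -
  define C where "C i = (if i \<in> U then {0..1} else {1::real})" for i
  have "convex {x. x \<in> C i}" for i
    by (simp add: C_def)
  then have "convex {t. \<forall>i. t$i \<in> C i}"
    by (rule convex_box_cart)
  moreover have "{t. \<forall>i. t$i \<in> C i} = cl_box U"
    by (auto simp: C_def cl_box_def)
  ultimately show ?thesis
    by simp
qed

lemma convex_open_box: "convex (open_box U)"
proof -
  define C where "C i = (if i \<in> U then {0<..<1} else {1::real})" for i
  have "convex {x. x \<in> C i}" for i
    by (simp add: C_def)
  then have "convex {t. \<forall>i. t$i \<in> C i}"
    by (rule convex_box_cart)
  moreover have "{t. \<forall>i. t$i \<in> C i} = open_box U"
    by (auto simp: C_def open_box_def)
  ultimately show ?thesis
    by simp
qed

lemma concave_on_cl_box_hobj: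
  fixes L :: "real^'n \<Rightarrow> real" and X :: "real^'p^'n"
  assumes grad: "\<And>eta. (L has_derivative (\<lambda>v. G eta \<bullet> v)) (at eta)"
    and hess: "\<And>eta. (G has_derivative (\<lambda>v. H eta *v v)) (at eta)"
    and bound: "\<And>eta. loewner_le (transpose (Xu_of U X) ** H eta ** Xu_of U X)
                                   ((2 * del) *\<^sub>R mat 1)"
  shows "concave_on (cl_box U) (\<lambda>t. hobj L X lam del t b0 b)"
proof -
  have "(t$i)\<^sup>2 \<le> 1" if "t \<in> cl_box U" for t i
    using that by (cases "i \<in> U") (auto simp: cl_box_def power_le_one)
  then have eq: "hobj L X lam del t b0 b
               = L (lin_pred X t b0 b) - del * (norm (t * b))\<^sup>2 + (lam + del) * (norm b)\<^sup>2"
    if "t \<in> cl_box U" for t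
    using that by (simp add: hobj_eq_loss_minus_quadratic)
  have conc: "concave_on (cl_box U)
          (\<lambda>t. L (lin_pred X t b0 b) - del * (norm (t * b))\<^sup>2 + (lam + del) * (norm b)\<^sup>2)"
    by (intro concave_on_add concave_on_loss_minus_quadratic[OF grad hess bound]
        concave_on_const[THEN iffD2] convex_cl_box) (auto simp: cl_box_def)
  show ?thesis
    by (rule concave_on_eq[OF conc eq])
qed

definition frac_set :: "'p set \<Rightarrow> real^'p \<Rightarrow> 'p set" where
  "frac_set U t = {i\<in>U. 0 < t$i \<and> t$i < 1}"

lemma Sset_if_frac_set_empty: "t \<in> Tset U k \<Longrightarrow> frac_set U t = {} \<Longrightarrow> t \<in> Sset U k"
  unfolding Sset_def Tset_def frac_set_def by force

lemma frac_set_Tset_not_singleton: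
  assumes t: "t \<in> Tset U k" and i: "i \<in> frac_set U t"
  shows "\<exists>j\<in>frac_set U t. j \<noteq> i"
proof (rule ccontr)
  assume "\<not> ?thesis"
  then have "t$j = 0 \<or> t$j = 1" if "j \<in> U - {i}" for j
    using t that unfolding frac_set_def Tset_def by force
  then have "t$j \<in> \<int>" if "j \<in> U - {i}" for j
    using that by fastforce
  then have "(\<Sum>j\<in>U - {i}. t$j) \<in> \<int>" by (rule Ints_sum)
  moreover have "t$i + (\<Sum>j\<in>U - {i}. t$j) = real k"
    using t i sum.remove[of U i "\<lambda>j. t$j"] by (simp add: Tset_def frac_set_def)
  ultimately have "t$i \<in> \<int>"
    by (metis Ints_diff Ints_of_nat add_diff_cancel_right')
  then show False
    using i Ints_nonzero_abs_less1[of "t$i"] by (auto simp: frac_set_def)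
qed

lemma Tset_transfer:
  assumes t: "t \<in> Tset U k" and ij: "i \<in> U" "j \<in> U" "i \<noteq> j"
    and "0 \<le> t$i + c" "t$i + c \<le> 1" "0 \<le> t$j - c" "t$j - c \<le> 1"
  shows "t + c *\<^sub>R (axis i 1 - axis j 1) \<in> Tset U k"
proof -
  have axis_sum: "(\<Sum>l\<in>U. axis m 1 $ l) = (1::real)" if "m \<in> U" for m
    using that by (simp add: axis_def)
  have "(\<Sum>l\<in>U. (t + c *\<^sub>R (axis i 1 - axis j 1))$l)
        = (\<Sum>l\<in>U. t$l) + c * ((\<Sum>l\<in>U. axis i 1 $ l) - (\<Sum>l\<in>U. axis j 1 $ l))"
    by (simp add: sum.distrib sum_subtractf sum_distrib_left right_diff_distrib)
  then have "(\<Sum>l\<in>U. (t + c *\<^sub>R (axis i 1 - axis j 1))$l) = (\<Sum>l\<in>U. t$l)"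
    using ij axis_sum by simp
  then show ?thesis
    using assms by (auto simp: Tset_def axis_def)
qed

lemma frac_set_transfer_psubset:
  assumes ij: "i \<in> frac_set U t" "j \<in> frac_set U t" "i \<noteq> j"
    and "t$i + c \<in> {0, 1} \<or> t$j - c \<in> {0, 1}"
  shows "frac_set U (t + c *\<^sub>R (axis i 1 - axis j 1)) \<subset> frac_set U t"
proof -
  have "frac_set U (t + c *\<^sub>R (axis i 1 - axis j 1)) \<subseteq> frac_set U t"
    using ij by (auto simp: frac_set_def axis_def)
  moreover have "i \<notin> frac_set U (t + c *\<^sub>R (axis i 1 - axis j 1))
                 \<or> j \<notin> frac_set U (t + c *\<^sub>R (axis i 1 - axis j 1))"
    using assms by (auto simp: frac_set_def axis_def)
  ultimately show ?thesis
    using ij by blast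
qed

lemma Tset_split_at_fractional_pair:
  assumes t: "t \<in> Tset U k" and ij: "i \<in> frac_set U t" "j \<in> frac_set U t" "i \<noteq> j"
  obtains t1 t2 a where "t1 \<in> Tset U k" "t2 \<in> Tset U k"
    "frac_set U t1 \<subset> frac_set U t" "frac_set U t2 \<subset> frac_set U t"
    "0 \<le> a" "a \<le> 1" "t = a *\<^sub>R t1 + (1 - a) *\<^sub>R t2"
proof
  define e :: "real^'a" where "e = axis i 1 - axis j 1"
  define \<alpha> where "\<alpha> = min (1 - t$i) (t$j)"
  define \<beta> where "\<beta> = min (t$i) (1 - t$j)"
  have frac: "i \<in> U" "j \<in> U" "0 < t$i" "t$i < 1" "0 < t$j" "t$j < 1"
    using ij by (auto simp: frac_set_def)
  then have pos: "0 < \<alpha>" "0 < \<beta>"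
    by (auto simp: \<alpha>_def \<beta>_def)
  show "t + \<alpha> *\<^sub>R e \<in> Tset U k" "t + (- \<beta>) *\<^sub>R e \<in> Tset U k"
    unfolding e_def using frac ij(3) by (intro Tset_transfer[OF t]; simp add: \<alpha>_def \<beta>_def)+
  show "frac_set U (t + \<alpha> *\<^sub>R e) \<subset> frac_set U t" "frac_set U (t + (- \<beta>) *\<^sub>R e) \<subset> frac_set U t"
    unfolding e_def using ij by (intro frac_set_transfer_psubset; auto simp: \<alpha>_def \<beta>_def min_def)+
  define a where "a = \<beta> / (\<alpha> + \<beta>)"
  show "0 \<le> a" "a \<le> 1"
    using pos by (auto simp: a_def)
  have "a *\<^sub>R (t + \<alpha> *\<^sub>R e) + (1 - a) *\<^sub>R (t + (- \<beta>) *\<^sub>R e)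
        = t + (a * \<alpha> - (1 - a) * \<beta>) *\<^sub>R e"
    by (simp add: algebra_simps)
  also have "a * \<alpha> - (1 - a) * \<beta> = 0"
    using pos by (simp add: a_def field_simps)
  finally show "t = a *\<^sub>R (t + \<alpha> *\<^sub>R e) + (1 - a) *\<^sub>R (t + (- \<beta>) *\<^sub>R e)"
    by simp
qed

lemma quasiconcave_on_Tset_vertex_le:
  fixes F :: "real^'p \<Rightarrow> 'b::linorder"
  assumes F: "quasiconcave_on (Tset U k) F"
  shows "t \<in> Tset U k \<Longrightarrow> \<exists>s\<in>Sset U k. F s \<le> F t"
proof (induction "card (frac_set U t)" arbitrary: t rule: less_induct)
  case less
  show ?case
  proof (cases "frac_set U t = {}")
    case True
    then show ?thesis
      using Sset_if_frac_set_empty[OF less.prems] by blast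
  next
    case False
    then obtain i j where ij: "i \<in> frac_set U t" "j \<in> frac_set U t" "i \<noteq> j"
      using frac_set_Tset_not_singleton[OF less.prems] by blast
    obtain t1 t2 a where t12: "t1 \<in> Tset U k" "t2 \<in> Tset U k"
      and fewer: "frac_set U t1 \<subset> frac_set U t" "frac_set U t2 \<subset> frac_set U t"
      and a: "0 \<le> a" "a \<le> 1" and t: "t = a *\<^sub>R t1 + (1 - a) *\<^sub>R t2"
      using Tset_split_at_fractional_pair[OF less.prems ij] by blast
    obtain s1 s2 where s: "s1 \<in> Sset U k" "F s1 \<le> F t1" "s2 \<in> Sset U k" "F s2 \<le> F t2"
      using less.hyps[OF psubset_card_mono[OF _ fewer(1)] t12(1)]
        less.hyps[OF psubset_card_mono[OF _ fewer(2)] t12(2)] by auto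
    have "min (F t1) (F t2) \<le> F t"
      using F t12 a unfolding t quasiconcave_on_def by blast
    then show ?thesis
      using s by (metis min_le_iff_disj order_trans)
  qed
qed

lemma finite_Sset: "finite (Sset U k)"
proof (rule finite_subset)
  show "Sset U k \<subseteq> (\<lambda>V. \<chi> i. if i \<in> V then 1 else 0) ` UNIV"
  proof
    fix s assume "s \<in> Sset U k"
    then have "s$i = 0 \<or> s$i = 1" for i
      unfolding Sset_def by (cases "i \<in> U") auto
    then have "s = (\<chi> i. if i \<in> {i. s$i = 1} then 1 else 0)"
      by (auto simp: vec_eq_iff)
    then show "s \<in> (\<lambda>V. \<chi> i. if i \<in> V then 1 else 0) ` UNIV"
      by blast
  qed
qed simp

lemma Sset_nonempty:
  assumes "k \<le> card U"
  shows "Sset U k \<noteq> {}"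
proof -
  obtain V where V: "V \<subseteq> U" "card V = k"
    using obtain_subset_with_card_n[OF assms] by metis
  define s :: "real^'a" where "s = (\<chi> i. if i \<in> V \<or> i \<notin> U then 1 else 0)"
  have "(\<Sum>i\<in>U. s$i) = real (card (U \<inter> V))"
    by (simp add: s_def sum.If_cases)
  then have "s \<in> Sset U k"
    using V by (auto simp: Sset_def s_def Int_absorb1)
  then show ?thesis
    by blast
qed

lemma quasiconcave_on_Tset_min_at_vertex:
  fixes F :: "real^'p \<Rightarrow> 'b::linorder"
  assumes F: "quasiconcave_on (Tset U k) F" and k: "k \<le> card U"
  shows "\<exists>s\<in>Sset U k. \<forall>t\<in>Tset U k. F s \<le> F t"
proof -
  have fin: "finite (F ` Sset U k)"
    using finite_Sset by (rule finite_imageI)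
  have "Min (F ` Sset U k) \<in> F ` Sset U k"
    using fin Sset_nonempty[OF k] by (intro Min_in) auto
  then obtain s where s: "Min (F ` Sset U k) = F s" "s \<in> Sset U k"
    by (rule imageE)
  have "F s \<le> F t" if t: "t \<in> Tset U k" for t
  proof -
    obtain s' where s': "s' \<in> Sset U k" "F s' \<le> F t"
      using quasiconcave_on_Tset_vertex_le[OF F t] by blast
    have "F s \<le> F s'"
      unfolding s(1)[symmetric] by (intro Min_le fin imageI s'(1))
    then show ?thesis
      using s'(2) by (rule order_trans)
  qed
  then show ?thesis
    using s(2) by blast
qed

theorem theorem1:
  fixes L :: "real^'n \<Rightarrow> real"
    and G :: "real^'n \<Rightarrow> real^'n"
    and H :: "real^'n \<Rightarrow> real^'n^'n"
    and X :: "real^'p^'n"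
    and U :: "'p set"
    and lam del :: real
  assumes grad: "\<And>eta. (L has_derivative (\<lambda>v. G eta \<bullet> v)) (at eta)"
    and hess: "\<And>eta. (G has_derivative (\<lambda>v. H eta *v v)) (at eta)"
    and lam: "lam \<ge> 0"
    and del: "del > 0"
    and bound: "\<And>eta. loewner_le (transpose (Xu_of U X) ** H eta ** Xu_of U X)
                                   ((2 * del) *\<^sub>R mat 1)"
  shows "(\<forall>b0 b. concave_on (open_box U) (\<lambda>t. hobj L X lam del t b0 b))
       \<and> ereal_concave_on (open_box U) (fobj L X lam del)
       \<and> (\<forall>k. k \<le> card U \<longrightarrow>
            (\<exists>s\<in>Sset U k. \<forall>t\<in>Tset U k. fobj L X lam del s \<le> fobj L X lam del t))"
proof (intro conjI allI impI)
  have concave_cl_box: "concave_on (cl_box U) (\<lambda>t. hobj L X lam del t b0 b)" for b0 b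
    by (rule concave_on_cl_box_hobj[OF grad hess bound])
  have fobj_INF: "fobj L X lam del = (\<lambda>t. INF bb. ereal (hobj L X lam del t (fst bb) (snd bb)))"
    by (simp add: fobj_def fun_eq_iff)
  have open_box_cl_box: "open_box U \<subseteq> cl_box U"
    by (auto simp: open_box_def cl_box_def)
  show concave_open_box: "concave_on (open_box U) (\<lambda>t. hobj L X lam del t b0 b)" for b0 b
    using convex_on_subset[OF concave_cl_box[unfolded concave_on_def] open_box_cl_box convex_open_box]
    unfolding concave_on_def .
  show "ereal_concave_on (open_box U) (fobj L X lam del)"
    unfolding fobj_INF by (rule ereal_concave_on_INF) (rule concave_open_box)
  have "quasiconcave_on (cl_box U) (fobj L X lam del)"
    unfolding fobj_INF by (intro quasiconcave_on_INF quasiconcave_on_ereal_if_concave_on concave_cl_box)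
  then have "quasiconcave_on (Tset U k) (fobj L X lam del)" for k
    by (rule quasiconcave_on_subset) (auto simp: Tset_def cl_box_def)
  then show "\<exists>s\<in>Sset U k. \<forall>t\<in>Tset U k. fobj L X lam del s \<le> fobj L X lam del t"
    if "k \<le> card U" for k
    using that by (rule quasiconcave_on_Tset_min_at_vertex)
qed

end
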